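(* For every integer $n\geqslant1$, \[ \sum_{k=0}^{n-1}\frac{(2k+1)^{2}}{(n-k)^{2}(n+k+1)^{2}} =\frac{\pi^{2}}{6}-\frac{2\gamma}{2n+1}-\frac{2}{2n+1}\psi(2n+1)-\psi_{1}(2n+1). \]
   Context: $\psi=\Gamma'/\Gamma$ is the digamma function, $\psi_1=\psi'$ the trigamma function, and $\gamma$ the Euler–Mascheroni constant. *)

theory Defs
  imports "HOL-Analysis.Analysis"
begin

end

theory Submission
  imports Defs
begin

text \<open>With \<open>a = n - k\<close> and \<open>b = n + k + 1\<close> the summand is \<open>(b - a)\<^sup>2 / (a\<^sup>2 b\<^sup>2)\<close> and
  \<open>a + b = 2n + 1\<close> does not depend on \<open>k\<close>, so partial fractions split it into
  \<open>1/a\<^sup>2 + 1/b\<^sup>2 - 2/(2n+1) (1/a + 1/b)\<close>. As \<open>k\<close> runs over \<open>0..n-1\<close>, \<open>a\<close> and \<open>b\<close> together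
  run over \<open>1..2n\<close> once, so the sum is \<open>\<Sum>j\<le>2n 1/j\<^sup>2 - 2 H\<^sub>2\<^sub>n/(2n+1)\<close>; the right-hand side
  is the same expression by \<open>\<psi>\<^sub>1(m+1) = \<zeta>(2) - \<Sum>j\<le>m 1/j\<^sup>2\<close> and \<open>\<psi>(m+1) = H\<^sub>m - \<gamma>\<close>.\<close>

lemma square_diff_div_square_mult_square:
  fixes a b :: "'a::field"
  assumes "a \<noteq> 0" "b \<noteq> 0" "a + b \<noteq> 0"
  shows "(b - a)^2 / (a^2 * b^2) = 1/a^2 + 1/b^2 - 2/(a+b) * (1/a + 1/b)"
proof -
  have "1/a + 1/b = (a+b) / (a*b)"
    using assms by (simp add: field_simps)
  then have "2/(a+b) * (1/a + 1/b) = 2/(a*b)"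
    using assms by (metis nonzero_mult_divide_mult_cancel_right2 times_divide_times_eq)
  moreover have "(b - a)^2 / (a^2 * b^2) = 1/a^2 + 1/b^2 - 2/(a*b)"
    using assms by (simp add: field_simps power2_eq_square)
  ultimately show ?thesis
    by simp
qed

lemma sum_mirror_pairs:
  fixes f :: "nat \<Rightarrow> 'a::comm_monoid_add"
  shows "(\<Sum>k<n. f (n - k) + f (n + k + 1)) = (\<Sum>j=1..2*n. f j)"
proof -
  have lower: "(\<Sum>k<n. f (n - k)) = (\<Sum>j=1..n. f j)"
    by (rule sum.reindex_bij_witness[of _ "\<lambda>j. n - j" "\<lambda>k. n - k"]) auto
  have upper: "(\<Sum>k<n. f (n + k + 1)) = (\<Sum>j=n+1..2*n. f j)"
    by (rule sum.reindex_bij_witness[of _ "\<lambda>j. j - (n + 1)" "\<lambda>k. n + k + 1"]) auto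
  have "(\<Sum>j=1..2*n. f j) = (\<Sum>j=1..n. f j) + (\<Sum>j=n+1..2*n. f j)"
    using sum.ub_add_nat[of 1 n f n] by (simp add: mult_2)
  then show ?thesis
    unfolding sum.distrib lower upper ..
qed

lemma Polygamma_1_one: "Polygamma 1 (1::real) = pi^2 / 6"
proof -
  have "(\<lambda>k. inverse ((1 + real k)^2)) sums (pi^2 / 6)"
    using inverse_squares_sums by (simp add: inverse_eq_divide add.commute)
  then show ?thesis
    using Polygamma_LIMSEQ[of "1::real" 1] by (simp add: sums_iff power2_eq_square)
qed

lemma Polygamma_1_of_nat_Suc:
  "Polygamma 1 (real (Suc m)) = pi^2 / 6 - (\<Sum>j=1..m. 1 / real j ^ 2)"
proof -
  have "Polygamma 1 (1 + real m) = Polygamma 1 1 - (\<Sum>k<m. 1 / (1 + real k)^2)"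
    using Polygamma_plus_of_nat[of m "1::real" 1] by (simp add: numeral_2_eq_2)
  also have "(\<Sum>k<m. 1 / (1 + real k)^2) = (\<Sum>j=1..m. 1 / real j ^ 2)"
    by (rule sum.reindex_bij_witness[of _ "\<lambda>j. j - 1" Suc]) (auto simp: add.commute)
  finally show ?thesis by (simp add: Polygamma_1_one del: One_nat_def)
qed

lemma sum_odd_square_div_square_products:
  "(\<Sum>k<n. (2 * real k + 1)^2 / ((real n - real k)^2 * (real n + real k + 1)^2))
     = (\<Sum>j=1..2*n. 1 / real j ^ 2) - 2 / (2 * real n + 1) * harm (2*n)"
proof -
  define f where "f j = 1 / real j ^ 2" for j
  define g where "g j = (inverse (real j) :: real)" for j
  have "(2 * real k + 1)^2 / ((real n - real k)^2 * (real n + real k + 1)^2)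
      = f (n - k) + f (n + k + 1) - 2 / (2 * real n + 1) * (g (n - k) + g (n + k + 1))"
    if "k < n" for k
  proof -
    have of_nat_eqs: "real (n - k) = real n - real k" "real (n + k + 1) = real n + real k + 1"
      using that by (simp_all add: of_nat_diff)
    show ?thesis
      unfolding f_def g_def inverse_eq_divide of_nat_eqs
      using square_diff_div_square_mult_square[of "real n - real k" "real n + real k + 1"] that
      by simp
  qed
  then have "(\<Sum>k<n. (2 * real k + 1)^2 / ((real n - real k)^2 * (real n + real k + 1)^2))
      = (\<Sum>k<n. f (n - k) + f (n + k + 1)) - 2 / (2 * real n + 1) * (\<Sum>k<n. g (n - k) + g (n + k + 1))"
    by (simp add: sum_subtractf sum_distrib_left)
  also have "\<dots> = (\<Sum>j=1..2*n. f j) - 2 / (2 * real n + 1) * (\<Sum>j=1..2*n. g j)"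
    unfolding sum_mirror_pairs ..
  finally show ?thesis
    by (simp add: f_def g_def harm_def)
qed

theorem mainTheorem7:
  fixes n :: nat
  assumes "n \<ge> 1"
  shows "(\<Sum>k=0..n-1. (2 * real k + 1)^2 / ((real n - real k)^2 * (real n + real k + 1)^2))
    = pi^2 / 6 - 2 * (euler_mascheroni :: real) / (2 * real n + 1)
      - 2 / (2 * real n + 1) * Digamma (2 * real n + 1)
      - Polygamma 1 (2 * real n + 1)"
proof -
  have "{0..n-1} = {..<n}"
    using assms by auto
  moreover have "Polygamma 1 (2 * real n + 1) = pi^2 / 6 - (\<Sum>j=1..2*n. 1 / real j ^ 2)"
    using Polygamma_1_of_nat_Suc[of "2 * n"] by (simp add: add.commute)
  moreover have "Digamma (2 * real n + 1) = harm (2 * n) - (euler_mascheroni :: real)"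
    using Digamma_of_nat[of "2 * n"] by (simp add: add.commute)
  ultimately show ?thesis
    by (simp add: sum_odd_square_div_square_products diff_divide_distrib right_diff_distrib)
qed

end
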